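(* Let $S\subseteq\{0,1\}^\ell$ be a finite set of vectors and let $a,b,c,d\in S$ be such that there is no index $h\in[\ell]$ with $a[h]=b[h]=c[h]=d[h]=1$ (an orthogonal quadruple). Then in the graph $G=\rho(S)$ defined below, $d_G\big((a,b,c)_{ABC},(d,c,b)_{DCB}\big)\ge 7$; in particular $\mathrm{diam}(G)\ge 7$.
   Context: $[\ell]=\{1,\dots,\ell\}$; for $x\in\{0,1\}^\ell$, $x[i]$ is its $i$-th coordinate. A "double-arc" (edge) of weight $w$ between $x$ and $y$ means both arcs $x\to y$ and $y\to x$ of weight $w$. Distances $d_G(x,y)$ are shortest directed path lengths; $\mathrm{diam}(G)=\max_{x,y} d_G(x,y)$ over ordered pairs. Construction of $G=\rho(S)$. Vertex set: two special vertices $u,v$ and six disjoint sets (index triples $(i,j,k)\in[\ell]^3$ are ordered and may have repeated entries): - ABC $=\{(a,b,c)_{ABC}: a,b,c\in S\}$; DCB $=\{(d,c,b)_{DCB}: d,c,b\in S\}$. - AB $=\{(a,b,i,j,k)_{AB}: a,b\in S,\ a[i]=a[j]=a[k]=1,$ and $b$ equals 1 on at least two of the positions $i,j,k\}$; DC $=\{(d,c,i,j,k)_{DC}: d,c\in S,\ d[i]=d[j]=d[k]=1,$ and $c$ equals 1 on at least two of the positions $i,j,k\}$. - $AD_Y=\{(a,d,i,j,k)_Y: a,d\in S,\ a[i]=a[j]=a[k]=d[i]=d[j]=d[k]=1\}$; $AD_X=\{(a,d,i,j,k)_X: a,d\in S,$ at most one of $a[i],a[j],a[k],d[i],d[j],d[k]$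 equals $0\}$. Arcs incident to $u,v$ (an arc to/from a set means to/from every vertex of that set): arcs $u\to$ABC of weight 0 and ABC$\to u$ of weight 4; $v\to$DCB of weight 4 and DCB$\to v$ of weight 0; $u\to$AB of weight 0 and AB$\to u$ of weight 3; DC$\to v$ of weight 0 and $v\to$DC of weight 3; double-arcs $u$–$v$ of weight 2, $u$–$AD_X$ and $v$–$AD_X$ of weight 1, $u$–$AD_Y$ and $v$–$AD_Y$ of weight 2, AB–$v$ of weight 2, DC–$u$ of weight 2. All other arcs are double-arcs of weight 1, present exactly in the following cases (only when both endpoints exist): - $(a,b,c)_{ABC}$–$(a,b,i,j,k)_{AB}$ if some $h\in\{i,j,k\}$ has $b[h]=c[h]=1$; - $(d,c,b)_{DCB}$–$(d,c,i,j,k)_{DC}$ if some $h\in\{i,j,k\}$ has $c[h]=b[h]=1$; - $(a,b,i,j,k)_{AB}$–$(a,b,i',j',k')_{AB}$ and $(d,c,i,j,k)_{DC}$–$(d,c,i',j',k')_{DC}$ for all index triples; - $(a,b,i,j,k)_{AB}$–$(a,d,i,j,k)_Y$ and $(a,d,i,j,k)_Y$–$(d,c,i,j,k)_{DC}$; - $(a,d,i,j,k)_X$–$(a,d',i,j,k)_Y$ for $d\neq d'$, and $(a,d,i,j,k)_X$–$(a',d,i,j,k)_Y$ for $a\neq a'$; - $(a,d,i,j,k)_X$–$(a,d,i',j',k')_Y$ for all index triples. No other arcs exist. *)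

theory Defs
  imports Main "HOL-Library.Extended_Nat"
begin

text \<open>Vectors in {0,1}^l are boolean lists of length l; coordinate h (1-based, h in [l])
  is "coord x h", with True meaning 1.\<close>

definition coord :: "bool list \<Rightarrow> nat \<Rightarrow> bool" where
  "coord x h = x ! (h - 1)"

definition idx :: "nat \<Rightarrow> nat \<Rightarrow> bool" where
  "idx l i \<longleftrightarrow> 1 \<le> i \<and> i \<le> l"

datatype vert =
    U | V
  | isABC: ABC "bool list" "bool list" "bool list"
  | isDCB: DCB "bool list" "bool list" "bool list"
  | isAB: AB "bool list" "bool list" nat nat nat
  | isDC: DC "bool list" "bool list" nat nat nat
  | isADY: ADY "bool list" "bool list" nat nat nat
  | isADX: ADX "bool list" "bool list" nat nat nat

definition cnt_true :: "bool list \<Rightarrow> nat" where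
  "cnt_true xs = length (filter id xs)"

definition cnt_false :: "bool list \<Rightarrow> nat" where
  "cnt_false xs = length (filter Not xs)"

fun is_vertex :: "nat \<Rightarrow> bool list set \<Rightarrow> vert \<Rightarrow> bool" where
  "is_vertex l S U = True"
| "is_vertex l S V = True"
| "is_vertex l S (ABC a b c) = (a \<in> S \<and> b \<in> S \<and> c \<in> S)"
| "is_vertex l S (DCB d c b) = (d \<in> S \<and> c \<in> S \<and> b \<in> S)"
| "is_vertex l S (AB a b i j k) = (a \<in> S \<and> b \<in> S \<and> idx l i \<and> idx l j \<and> idx l k \<and>
      coord a i \<and> coord a j \<and> coord a k \<and> 2 \<le> cnt_true [coord b i, coord b j, coord b k])"
| "is_vertex l S (DC d c i j k) = (d \<in> S \<and> c \<in> S \<and> idx l i \<and> idx l j \<and> idx l k \<and>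
      coord d i \<and> coord d j \<and> coord d k \<and> 2 \<le> cnt_true [coord c i, coord c j, coord c k])"
| "is_vertex l S (ADY a d i j k) = (a \<in> S \<and> d \<in> S \<and> idx l i \<and> idx l j \<and> idx l k \<and>
      coord a i \<and> coord a j \<and> coord a k \<and> coord d i \<and> coord d j \<and> coord d k)"
| "is_vertex l S (ADX a d i j k) = (a \<in> S \<and> d \<in> S \<and> idx l i \<and> idx l j \<and> idx l k \<and>
      cnt_false [coord a i, coord a j, coord a k, coord d i, coord d j, coord d k] \<le> 1)"

definition arc_oneway :: "vert \<Rightarrow> vert \<Rightarrow> nat \<Rightarrow> bool" where
  "arc_oneway x y w \<longleftrightarrow>
     (x = U \<and> isABC y \<and> w = 0) \<or> (isABC x \<and> y = U \<and> w = 4) \<or>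
     (x = V \<and> isDCB y \<and> w = 4) \<or> (isDCB x \<and> y = V \<and> w = 0) \<or>
     (x = U \<and> isAB y \<and> w = 0) \<or> (isAB x \<and> y = U \<and> w = 3) \<or>
     (isDC x \<and> y = V \<and> w = 0) \<or> (x = V \<and> isDC y \<and> w = 3)"

definition dbl_uv :: "vert \<Rightarrow> vert \<Rightarrow> nat \<Rightarrow> bool" where
  "dbl_uv x y w \<longleftrightarrow>
     (x = U \<and> y = V \<and> w = 2) \<or>
     ((x = U \<or> x = V) \<and> isADX y \<and> w = 1) \<or>
     ((x = U \<or> x = V) \<and> isADY y \<and> w = 2) \<or>
     (isAB x \<and> y = V \<and> w = 2) \<or>
     (isDC x \<and> y = U \<and> w = 2)"

fun e1 :: "vert \<Rightarrow> vert \<Rightarrow> bool" where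
  "e1 (ABC a b c) (AB a' b' i j k) =
     (a' = a \<and> b' = b \<and> (\<exists>h\<in>{i, j, k}. coord b h \<and> coord c h))"
| "e1 (DCB d c b) (DC d' c' i j k) =
     (d' = d \<and> c' = c \<and> (\<exists>h\<in>{i, j, k}. coord c h \<and> coord b h))"
| "e1 (AB a b i j k) (AB a' b' i' j' k') = (a' = a \<and> b' = b)"
| "e1 (DC d c i j k) (DC d' c' i' j' k') = (d' = d \<and> c' = c)"
| "e1 (AB a b i j k) (ADY a' d i' j' k') = (a' = a \<and> (i', j', k') = (i, j, k))"
| "e1 (ADY a d i j k) (DC d' c i' j' k') = (d' = d \<and> (i', j', k') = (i, j, k))"
| "e1 (ADX a d i j k) (ADY a' d' i' j' k') =
     ((a' = a \<and> d' \<noteq> d \<and> (i', j', k') = (i, j, k)) \<or>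
      (a' \<noteq> a \<and> d' = d \<and> (i', j', k') = (i, j, k)) \<or>
      (a' = a \<and> d' = d))"
| "e1 _ _ = False"

definition arc :: "nat \<Rightarrow> bool list set \<Rightarrow> vert \<Rightarrow> vert \<Rightarrow> nat \<Rightarrow> bool" where
  "arc l S x y w \<longleftrightarrow> is_vertex l S x \<and> is_vertex l S y \<and>
     (arc_oneway x y w \<or> dbl_uv x y w \<or> dbl_uv y x w \<or> (w = 1 \<and> (e1 x y \<or> e1 y x)))"

inductive walk :: "nat \<Rightarrow> bool list set \<Rightarrow> vert \<Rightarrow> vert \<Rightarrow> nat \<Rightarrow> bool"
  for l S where
  nil: "is_vertex l S x \<Longrightarrow> walk l S x x 0"
| cons: "arc l S x z w1 \<Longrightarrow> walk l S z y w2 \<Longrightarrow> walk l S x y (w1 + w2)"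

text \<open>Shortest directed path length (infinity if unreachable) and diameter.\<close>
definition distG :: "nat \<Rightarrow> bool list set \<Rightarrow> vert \<Rightarrow> vert \<Rightarrow> enat" where
  "distG l S x y = (INF w \<in> {w. walk l S x y w}. enat w)"

definition diamG :: "nat \<Rightarrow> bool list set \<Rightarrow> enat" where
  "diamG l S = (SUP p \<in> {(x, y). is_vertex l S x \<and> is_vertex l S y}. distG l S (fst p) (snd p))"

end

theory Submission
  imports Defs
begin

text \<open>Proof idea: assign to every vertex \<open>x\<close> of \<open>\<rho>(S)\<close> a natural number \<open>\<phi>(x)\<close>, a lower
  bound on its distance to \<open>(d,c,b)\<^sub>D\<^sub>C\<^sub>B\<close>, such that \<open>\<phi>\<close> drops by at most w along every arc of
  weight w. Then \<open>\<phi>\<close> drops by at most the length of any walk, and since \<open>\<phi>((a,b,c)\<^sub>A\<^sub>B\<^sub>C) = 7\<close> and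
  \<open>\<phi>((d,c,b)\<^sub>D\<^sub>C\<^sub>B) = 0\<close>, every walk between them has length at least 7. Checking the arcs is a
  finite case analysis. Orthogonality of \<open>a,b,c,d\<close> enters only at the vertices \<open>(a,d,i,j,k)\<^sub>Y\<close>:
  there \<open>a\<close> and \<open>d\<close> are 1 on \<open>i,j,k\<close>, so \<open>b\<close> and \<open>c\<close> have no common 1 among \<open>i,j,k\<close>, which
  keeps the two shortcuts through \<open>(a,b,i,j,k)\<^sub>A\<^sub>B\<close> and \<open>(d,c,i,j,k)\<^sub>D\<^sub>C\<close> from being combined.\<close>

lemma walk_potential_bound:
  fixes \<phi> :: "vert \<Rightarrow> nat"
  assumes "\<And>x y w. arc l S x y w \<Longrightarrow> \<phi> x \<le> w + \<phi> y"
    and "walk l S x y w"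
  shows "\<phi> x \<le> w + \<phi> y"
  using assms(2)
proof induction
  case (cons x z w1 y w2)
  then show ?case using assms(1)[of x z w1] by simp
qed simp

lemma distG_potential_bound:
  fixes \<phi> :: "vert \<Rightarrow> nat"
  assumes "\<And>x y w. arc l S x y w \<Longrightarrow> \<phi> x \<le> w + \<phi> y"
  shows "enat (\<phi> x - \<phi> y) \<le> distG l S x y"
  unfolding distG_def
proof (rule INF_greatest)
  fix w assume "w \<in> {w. walk l S x y w}"
  then have "\<phi> x \<le> w + \<phi> y" using walk_potential_bound[of l S \<phi> x y w] assms by blast
  then show "enat (\<phi> x - \<phi> y) \<le> enat w" by simp
qed

lemma distG_le_diamG:
  assumes "is_vertex l S x" and "is_vertex l S y"
  shows "distG l S x y \<le> diamG l S"
  unfolding diamG_def by (rule SUP_upper2[where i = "(x, y)"]) (use assms in auto)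

definition ones_at :: "bool list \<Rightarrow> nat \<Rightarrow> nat \<Rightarrow> nat \<Rightarrow> bool" where
  "ones_at a i j k \<longleftrightarrow> coord a i \<and> coord a j \<and> coord a k"

definition two_ones_at :: "bool list \<Rightarrow> nat \<Rightarrow> nat \<Rightarrow> nat \<Rightarrow> bool" where
  "two_ones_at c i j k \<longleftrightarrow> 2 \<le> cnt_true [coord c i, coord c j, coord c k]"

definition common_one_at :: "bool list \<Rightarrow> bool list \<Rightarrow> nat \<Rightarrow> nat \<Rightarrow> nat \<Rightarrow> bool" where
  "common_one_at b c i j k \<longleftrightarrow> (\<exists>h\<in>{i, j, k}. coord b h \<and> coord c h)"

lemma two_le_cnt_true_3_iff: "2 \<le> cnt_true [p, q, r] \<longleftrightarrow> (p \<and> q) \<or> (p \<and> r) \<or> (q \<and> r)"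
  by (cases p; cases q; cases r) (simp_all add: cnt_true_def)

fun potential :: "bool list \<Rightarrow> bool list \<Rightarrow> bool list \<Rightarrow> bool list \<Rightarrow> vert \<Rightarrow> nat" where
  "potential a b c d U = 3"
| "potential a b c d V = 4"
| "potential a b c d (ABC x y z) =
     (if x = a \<and> y = b \<and> z = c then 7 else if x = a \<and> y = b then 5 else 3)"
| "potential a b c d (AB x y i j k) =
     (if x = a \<and> y = b then (if common_one_at b c i j k then 6 else 5)
      else if x = a then 4 else 3)"
| "potential a b c d (ADY x y i j k) =
     (if x = a \<and> y = d then (if two_ones_at c i j k then 3 else 4)
      else if x = a then 5 else if y = d then (if ones_at a i j k then 3 else 2) else 3)"
| "potential a b c d (ADX x y i j k) =
     (if x = a then (if y \<noteq> d \<or> ones_at a i j k then 4 else 3)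
      else if y = d then 3 else if ones_at a i j k then 4 else 3)"
| "potential a b c d (DC x y i j k) =
     (if x = d \<and> y = c then (if common_one_at b c i j k then 1 else 2)
      else if x = d then 3 else 4)"
| "potential a b c d (DCB x y z) =
     (if x = d \<and> y = c \<and> z = b then 0 else if x = d \<and> y = c then 1 else if x = d then 2 else 3)"

lemma arc_potential:
  assumes orth: "\<And>h. idx l h \<Longrightarrow> coord a h \<Longrightarrow> coord b h \<Longrightarrow> coord c h \<Longrightarrow> \<not> coord d h"
    and "arc l S x y w"
  shows "potential a b c d x \<le> w + potential a b c d y"
  using assms(2) unfolding arc_def arc_oneway_def dbl_uv_def
  by (cases x; cases y; simp add: ones_at_def two_ones_at_def common_one_at_def two_le_cnt_true_3_iff)
    (auto simp: orth)

theorem mainTheorem3: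
  fixes l :: nat and S :: "bool list set" and a b c d :: "bool list"
  assumes "finite S"
    and "\<forall>x\<in>S. length x = l"
    and "a \<in> S" and "b \<in> S" and "c \<in> S" and "d \<in> S"
    and "\<not> (\<exists>h\<in>{1..l}. coord a h \<and> coord b h \<and> coord c h \<and> coord d h)"
  shows "distG l S (ABC a b c) (DCB d c b) \<ge> 7 \<and> diamG l S \<ge> 7"
proof -
  have orth: "\<And>h. idx l h \<Longrightarrow> coord a h \<Longrightarrow> coord b h \<Longrightarrow> coord c h \<Longrightarrow> \<not> coord d h"
    using assms(7) unfolding idx_def by auto
  have "enat (potential a b c d (ABC a b c) - potential a b c d (DCB d c b))
      \<le> distG l S (ABC a b c) (DCB d c b)"
    by (rule distG_potential_bound) (rule arc_potential[OF orth])
  then have dist: "7 \<le> distG l S (ABC a b c) (DCB d c b)"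
    by (simp add: numeral_eq_enat)
  also have "\<dots> \<le> diamG l S"
    by (rule distG_le_diamG) (use assms(3-6) in simp_all)
  finally show ?thesis using dist by simp
qed

end
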